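(* Let $(V,o)$ be a normal surface singularity of degree one (i.e. $Z^2=-1$) with $p_f(V,o)>0$, where $Z$ is the fundamental cycle on the minimal resolution. Assume that $Z$ is essentially irreducible. Then $$p_a(V,o)=\frac{p(p-1)m}{2}+1,$$ where $p=p_f(V,o)$ and $m$ is the length of the Yau sequence for $Z$.
   Context: Let $\pi\colon X\to V$ be the minimal resolution and $\pi^{-1}(o)=\bigcup_{i=1}^n E_i$ the irreducible components of the exceptional set. A cycle is $D=\sum d_iE_i$, $d_i\in\mathbb Z$; $D_1\le D_2$ means coefficientwise inequality, $D_1<D_2$ means $D_1\le D_2$, $D_1\neq D_2$. $K$ is the canonical divisor of $X$; for a cycle $D>0$, $p_a(D)=1+\frac12(D^2+D\cdot K)$. The fundamental cycle $Z$ is the smallest cycle $D>0$ with support $\pi^{-1}(o)$ with $D\cdot E_i\le0$ for all $i$; $p_f(V,o)=p_a(Z)$; the degree is $-Z^2$. The arithmetic genus is $p_a(V,o)=\max\{p_a(D)\mid D>0\text{ a cycle}\}$. "$\mathcal O_D(-C)$ numerically trivial" means $C\cdot E=0$ for every irreducible component $E\le D$. $Z_{min}$ is the unique minimal cycle $0<Z_{min}\le Z$ with $p_a(Z_{min})=p_a(Z)$. Yau sequence: for a cycle $D$ that is the fundamental cycle on its support with $Z_{min}\le D$, $p_a(D)=p_f(V,o)$ and $D\cdot E=0$ for all components $E\le Z_{min}$, the Tyurina component of $D$ is the unique maximal cycle $0<D'<D$ with $\mathcal O_{D'}(-D)$ numerically trivial and $p_a(D')=p_a(D)$. Set $D_1=Z$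 and $D_{i+1}=$ Tyurina component of $D_i$ as long as $D_i\cdot E=0$ for all components $E\le Z_{min}$, stopping at the first $D_m$ with $D_m\cdot Z_{min}<0$; $m$ is the length of the Yau sequence. A $(-2)$-curve is a smooth rational exceptional curve $E$ with $E^2=-2$. $Z$ is essentially irreducible if there is a component $A\le Z$ which is not a $(-2)$-curve such that, with $k$ the coefficient of $A$ in $Z$, either $Z=kA$ or all components of $Z-kA$ are $(-2)$-curves. *)

theory Defs
  imports Complex_Main
begin

text \<open>Combinatorial model of the exceptional set of the minimal resolution
 of a normal surface singularity: the irreducible components E_i are indexed by a
 finite type 'i; inter_mat i j = E_i . E_j, and genus i = arithmetic genus p_a(E_i).\<close>

type_synonym 'i cycle = "'i \<Rightarrow> int"

definition exc_config :: "('i::finite \<Rightarrow> 'i \<Rightarrow> int) \<Rightarrow> ('i \<Rightarrow> nat) \<Rightarrow> bool" where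
  "exc_config M g \<longleftrightarrow>
     (\<forall>i j. M i j = M j i) \<and>
     (\<forall>i j. i \<noteq> j \<longrightarrow> M i j \<ge> 0) \<and>
     (\<forall>x::'i \<Rightarrow> real. (\<exists>i. x i \<noteq> 0) \<longrightarrow> (\<Sum>i\<in>UNIV. \<Sum>j\<in>UNIV. x i * x j * of_int (M i j)) < 0) \<and>
     (\<forall>i j. (\<lambda>a b. a \<noteq> b \<and> M a b > 0)\<^sup>*\<^sup>* i j)"

text \<open>minimality of the resolution: no smooth rational (-1)-curve\<close>
definition minimal_config :: "('i::finite \<Rightarrow> 'i \<Rightarrow> int) \<Rightarrow> ('i \<Rightarrow> nat) \<Rightarrow> bool" where
  "minimal_config M g \<longleftrightarrow> (\<forall>i. \<not> (g i = 0 \<and> M i i = -1))"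

definition inter :: "('i::finite \<Rightarrow> 'i \<Rightarrow> int) \<Rightarrow> 'i cycle \<Rightarrow> 'i cycle \<Rightarrow> int" where
  "inter M C D = (\<Sum>i\<in>UNIV. \<Sum>j\<in>UNIV. C i * D j * M i j)"

definition inter_comp :: "('i::finite \<Rightarrow> 'i \<Rightarrow> int) \<Rightarrow> 'i cycle \<Rightarrow> 'i \<Rightarrow> int" where
  "inter_comp M D k = (\<Sum>i\<in>UNIV. D i * M i k)"

text \<open>K . D, using adjunction K.E_i = 2 p_a(E_i) - 2 - E_i^2\<close>
definition canon :: "('i::finite \<Rightarrow> 'i \<Rightarrow> int) \<Rightarrow> ('i \<Rightarrow> nat) \<Rightarrow> 'i cycle \<Rightarrow> int" where
  "canon M g D = (\<Sum>i\<in>UNIV. D i * (2 * int (g i) - 2 - M i i))"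

text \<open>p_a(D) = 1 + (D^2 + K.D)/2 (the numerator is always even)\<close>
definition pa :: "('i::finite \<Rightarrow> 'i \<Rightarrow> int) \<Rightarrow> ('i \<Rightarrow> nat) \<Rightarrow> 'i cycle \<Rightarrow> int" where
  "pa M g D = 1 + (inter M D D + canon M g D) div 2"

definition pos_cycle :: "'i cycle \<Rightarrow> bool" where
  "pos_cycle D \<longleftrightarrow> (\<forall>i. D i \<ge> 0) \<and> (\<exists>i. D i \<noteq> 0)"

definition supp :: "'i cycle \<Rightarrow> 'i set" where
  "supp D = {i. D i \<noteq> 0}"

definition is_fund_on :: "('i::finite \<Rightarrow> 'i \<Rightarrow> int) \<Rightarrow> 'i set \<Rightarrow> 'i cycle \<Rightarrow> bool" where
  "is_fund_on M S D \<longleftrightarrow>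
     (let P = (\<lambda>D. pos_cycle D \<and> supp D = S \<and> (\<forall>i\<in>S. inter_comp M D i \<le> 0)) in
      P D \<and> (\<forall>D'. P D' \<longrightarrow> D \<le> D'))"

definition fund_cycle :: "('i::finite \<Rightarrow> 'i \<Rightarrow> int) \<Rightarrow> 'i cycle" where
  "fund_cycle M = (THE D. is_fund_on M UNIV D)"

definition p_f :: "('i::finite \<Rightarrow> 'i \<Rightarrow> int) \<Rightarrow> ('i \<Rightarrow> nat) \<Rightarrow> int" where
  "p_f M g = pa M g (fund_cycle M)"

definition arith_genus :: "('i::finite \<Rightarrow> 'i \<Rightarrow> int) \<Rightarrow> ('i \<Rightarrow> nat) \<Rightarrow> int" where
  "arith_genus M g = (GREATEST a. \<exists>D. pos_cycle D \<and> a = pa M g D)"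

definition Z_min :: "('i::finite \<Rightarrow> 'i \<Rightarrow> int) \<Rightarrow> ('i \<Rightarrow> nat) \<Rightarrow> 'i cycle" where
  "Z_min M g = (THE D.
     (let Z = fund_cycle M; P = (\<lambda>D. pos_cycle D \<and> D \<le> Z \<and> pa M g D = pa M g Z) in
      P D \<and> (\<forall>D'. P D' \<longrightarrow> \<not> D' < D)))"

text \<open>O_{D'}(-C) numerically trivial\<close>
definition num_trivial :: "('i::finite \<Rightarrow> 'i \<Rightarrow> int) \<Rightarrow> 'i cycle \<Rightarrow> 'i cycle \<Rightarrow> bool" where
  "num_trivial M D' C \<longleftrightarrow> (\<forall>i\<in>supp D'. inter_comp M C i = 0)"

definition tyurina :: "('i::finite \<Rightarrow> 'i \<Rightarrow> int) \<Rightarrow> ('i \<Rightarrow> nat) \<Rightarrow> 'i cycle \<Rightarrow> 'i cycle" where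
  "tyurina M g D = (THE D'.
     (let P = (\<lambda>X. pos_cycle X \<and> X < D \<and> num_trivial M X D \<and> pa M g X = pa M g D) in
      P D' \<and> (\<forall>X. P X \<longrightarrow> \<not> D' < X)))"

text \<open>yau_cycle k = D_{k+1}: D_1 = Z, D_{i+1} = Tyurina component of D_i\<close>
fun yau_cycle :: "('i::finite \<Rightarrow> 'i \<Rightarrow> int) \<Rightarrow> ('i \<Rightarrow> nat) \<Rightarrow> nat \<Rightarrow> 'i cycle" where
  "yau_cycle M g 0 = fund_cycle M"
| "yau_cycle M g (Suc k) = tyurina M g (yau_cycle M g k)"

text \<open>length m of the Yau sequence: the index of the first D_m with D_m . Z_min < 0\<close>
definition yau_length :: "('i::finite \<Rightarrow> 'i \<Rightarrow> int) \<Rightarrow> ('i \<Rightarrow> nat) \<Rightarrow> nat" where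
  "yau_length M g = Suc (LEAST k. inter M (yau_cycle M g k) (Z_min M g) < 0)"

definition minus2_curve :: "('i::finite \<Rightarrow> 'i \<Rightarrow> int) \<Rightarrow> ('i \<Rightarrow> nat) \<Rightarrow> 'i \<Rightarrow> bool" where
  "minus2_curve M g i \<longleftrightarrow> g i = 0 \<and> M i i = -2"

definition ess_irreducible :: "('i::finite \<Rightarrow> 'i \<Rightarrow> int) \<Rightarrow> ('i \<Rightarrow> nat) \<Rightarrow> bool" where
  "ess_irreducible M g \<longleftrightarrow>
     (let Z = fund_cycle M in
      \<exists>A. Z A > 0 \<and> \<not> minus2_curve M g A \<and>
        (let k = Z A; R = (\<lambda>i. Z i - (if i = A then k else 0)) in
         (\<forall>i. R i = 0) \<or> (\<forall>i\<in>supp R. minus2_curve M g i)))"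

end

theory Submission
  imports Defs "HOL-Analysis.Determinants" "HOL-Library.Function_Algebras"
begin

(* All components other than A are (-2)-curves, so K.D = D_A (K.A) for every cycle D.
   A cycle D >= 0 that is nef on its support with D^2 = -1 meets exactly one component E
   negatively, with D.E = -1 and coefficient 1; if E is a (-2)-curve, D - E again has these
   properties and the same arithmetic genus. Starting from D_1 = Z and removing such components
   until the component met negatively is A yields Z = D_1 > D_2 > ... > D_m, which is the Yau
   sequence: D_(k+1) is the Tyurina component of D_k and D_m = Z_min. The D_k are orthonormal
   for the negated intersection form and sum_k D_k.F = -1 for F = A and 0 otherwise; in
   particular K.A = 2p - 1. Projecting an arbitrary cycle D onto the span of the D_k (Bessel's
   inequality) gives D^2 + K.D <= sum_k ((2p - 1) a_k - a_k^2) <= m p (p - 1) with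
   a_k = -D.D_k, and the cycle p (D_1 + ... + D_m) attains this bound. *)

section \<open>Cycles and intersection numbers\<close>

definition comp_cycle :: "'i \<Rightarrow> 'i cycle" where
  "comp_cycle i = (\<lambda>j. if j = i then 1 else 0)"

definition pa_num :: "('i::finite \<Rightarrow> 'i \<Rightarrow> int) \<Rightarrow> ('i \<Rightarrow> nat) \<Rightarrow> 'i cycle \<Rightarrow> int" where
  "pa_num M g D = inter M D D + canon M g D"

lemma inter_eq_sum_inter_comp: "inter M C D = (\<Sum>j\<in>UNIV. D j * inter_comp M C j)"
  unfolding inter_def inter_comp_def
  by (subst sum.swap) (simp add: sum_distrib_left mult_ac)

lemma inter_comp_add: "inter_comp M (C + D) k = inter_comp M C k + inter_comp M D k"
  by (simp add: inter_comp_def algebra_simps sum.distrib)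

lemma inter_comp_diff: "inter_comp M (C - D) k = inter_comp M C k - inter_comp M D k"
  by (simp add: inter_comp_def algebra_simps sum_subtractf)

lemma sum_comp_cycle_mult: "(\<Sum>j\<in>UNIV. comp_cycle i j * f j) = f (i::'i::finite)"
proof -
  have "(\<Sum>j\<in>UNIV. comp_cycle i j * f j) = (\<Sum>j\<in>UNIV. if j = i then f j else 0)"
    by (rule sum.cong) (auto simp: comp_cycle_def)
  then show ?thesis by simp
qed

lemma inter_comp_comp_cycle [simp]: "inter_comp M (comp_cycle i) k = M i k"
  unfolding inter_comp_def by (rule sum_comp_cycle_mult)

lemma inter_comp_cycle_right [simp]: "inter M D (comp_cycle i) = inter_comp M D i"
  unfolding inter_eq_sum_inter_comp by (rule sum_comp_cycle_mult)

lemma inter_add_left: "inter M (C + D) W = inter M C W + inter M D W"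
  by (simp add: inter_eq_sum_inter_comp inter_comp_add algebra_simps sum.distrib)

lemma inter_diff_left: "inter M (C - D) W = inter M C W - inter M D W"
  by (simp add: inter_eq_sum_inter_comp inter_comp_diff algebra_simps sum_subtractf)

lemma inter_comp_sum:
  "inter_comp M (\<lambda>F. \<Sum>k\<in>S. c k * W k F) j = (\<Sum>k\<in>S. c k * inter_comp M (W k) j)"
  unfolding inter_comp_def
  by (simp add: sum_distrib_right sum_distrib_left mult_ac) (rule sum.swap)

lemma inter_sum_left:
  "inter M (\<lambda>F. \<Sum>k\<in>S. c k * W k F) V = (\<Sum>k\<in>S. c k * inter M (W k) V)"
  unfolding inter_eq_sum_inter_comp inter_comp_sum
  by (simp add: sum_distrib_left mult_ac) (rule sum.swap)

lemma inter_scale_left: "inter M (\<lambda>i. s * C i) D = s * inter M C D"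
  unfolding inter_def by (simp add: sum_distrib_left mult_ac)

lemma inter_scale_right: "inter M C (\<lambda>i. s * D i) = s * inter M C D"
  unfolding inter_def by (simp add: sum_distrib_left mult_ac)

lemma canon_scale: "canon M g (\<lambda>i. s * D i) = s * canon M g D"
  unfolding canon_def by (simp add: sum_distrib_left mult_ac)

lemma canon_comp_cycle: "canon M g (comp_cycle i) = 2 * int (g i) - 2 - M i i"
  unfolding canon_def by (rule sum_comp_cycle_mult)

lemma canon_add: "canon M g (C + D) = canon M g C + canon M g D"
  by (simp add: canon_def distrib_right sum.distrib)

lemma canon_diff: "canon M g (C - D) = canon M g C - canon M g D"
  by (simp add: canon_def left_diff_distrib sum_subtractf)

lemma the_maximal_eq_greatest:
  fixes a :: "'a::order"
  assumes "P a" "\<And>x. P x \<Longrightarrow> x \<le> a"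
  shows "(THE x. P x \<and> (\<forall>y. P y \<longrightarrow> \<not> x < y)) = a"
  using assms by (intro the_equality) (auto simp: less_le_not_le intro: order.antisym)

lemma the_minimal_eq_least:
  fixes a :: "'a::order"
  assumes "P a" "\<And>x. P x \<Longrightarrow> a \<le> x"
  shows "(THE x. P x \<and> (\<forall>y. P y \<longrightarrow> \<not> y < x)) = a"
  using assms by (intro the_equality) (auto simp: less_le_not_le intro: order.antisym)

lemma sum_eq_neg_one_nonpos:
  fixes t :: "'a \<Rightarrow> int"
  assumes "finite S" "\<And>x. x \<in> S \<Longrightarrow> t x \<le> 0" "sum t S = -1"
  shows "\<exists>E\<in>S. t E = -1 \<and> (\<forall>F\<in>S - {E}. t F = 0)"
proof -
  obtain E where E: "E \<in> S" "t E \<noteq> 0"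
    using assms(3) by (metis sum.neutral zero_neq_neg_one)
  have split: "sum t S = t E + sum t (S - {E})"
    using assms(1) E(1) by (simp add: sum.remove)
  have "sum t (S - {E}) \<le> 0"
    using assms(2) by (auto intro: sum_nonpos)
  then have "t E = -1" and rest: "sum t (S - {E}) = 0"
    using split assms(2)[OF E(1)] E(2) assms(3) by linarith+
  moreover have "sum (\<lambda>x. - t x) (S - {E}) = 0"
    using rest by (simp add: sum_negf)
  ultimately have "\<forall>F\<in>S - {E}. t F = 0"
    using assms(1,2) sum_nonneg_eq_0_iff[of "S - {E}" "\<lambda>x. - t x"] by auto
  with E(1) \<open>t E = -1\<close> show ?thesis by blast
qed

lemma int_quadratic_bound: "(2 * p - 1) * a - a * a \<le> p * (p - 1)" for a p :: int
proof -
  have "0 \<le> (a - p) * (a - p + 1)"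
    by (cases "p \<le> a") (simp_all add: mult_nonpos_nonpos)
  then show ?thesis by (simp add: algebra_simps)
qed

lemma det_Ints:
  fixes A :: "real^'n^'n"
  assumes "\<And>i j. A$i$j \<in> \<int>"
  shows "det A \<in> \<int>"
  unfolding det_def using assms by (intro Ints_sum Ints_mult Ints_prod) auto

definition degree_one_nef :: "('i::finite \<Rightarrow> 'i \<Rightarrow> int) \<Rightarrow> 'i cycle \<Rightarrow> bool" where
  "degree_one_nef M D \<longleftrightarrow>
     (\<forall>F. 0 \<le> D F) \<and> (\<forall>F. 0 < D F \<longrightarrow> inter_comp M D F \<le> 0) \<and> inter M D D = -1"

definition is_neg_comp :: "('i::finite \<Rightarrow> 'i \<Rightarrow> int) \<Rightarrow> 'i cycle \<Rightarrow> 'i \<Rightarrow> bool" where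
  "is_neg_comp M D E \<longleftrightarrow>
     D E = 1 \<and> inter_comp M D E = -1 \<and> (\<forall>F. 0 < D F \<and> F \<noteq> E \<longrightarrow> inter_comp M D F = 0)"

definition neg_comp :: "('i::finite \<Rightarrow> 'i \<Rightarrow> int) \<Rightarrow> 'i cycle \<Rightarrow> 'i" where
  "neg_comp M D = (SOME E. is_neg_comp M D E)"

lemma degree_one_nef_ex_neg_comp:
  assumes "degree_one_nef M D"
  shows "\<exists>E. is_neg_comp M D E"
proof -
  define t where "t F = D F * inter_comp M D F" for F
  have "t F \<le> 0" for F
    using assms unfolding degree_one_nef_def t_def
    by (cases "0 < D F") (auto simp: mult_le_0_iff)
  moreover have "sum t UNIV = -1"
    using assms by (simp add: degree_one_nef_def t_def inter_eq_sum_inter_comp mult.commute)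
  ultimately obtain E where E: "t E = -1" and others: "\<And>F. F \<noteq> E \<Longrightarrow> t F = 0"
    using sum_eq_neg_one_nonpos[of UNIV t] by auto
  have "0 \<le> D E"
    using assms by (simp add: degree_one_nef_def)
  moreover have "D E * - inter_comp M D E = 1"
    using E by (simp add: t_def)
  ultimately have "0 < D E"
    by (metis less_le mult_zero_left zero_neq_one)
  with \<open>D E * - inter_comp M D E = 1\<close> have "D E = 1 \<and> inter_comp M D E = -1"
    using pos_zmult_eq_1_iff[of "D E" "- inter_comp M D E"] by simp
  moreover have "inter_comp M D F = 0" if "0 < D F" "F \<noteq> E" for F
    using others[OF that(2)] that(1) by (simp add: t_def)
  ultimately show ?thesis
    unfolding is_neg_comp_def by blast
qed

lemma is_neg_comp_neg_comp: "degree_one_nef M D \<Longrightarrow> is_neg_comp M D (neg_comp M D)"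
  unfolding neg_comp_def by (rule someI_ex) (rule degree_one_nef_ex_neg_comp)

section \<open>Negative definite intersection forms\<close>

locale neg_definite_form =
  fixes M :: "'i::finite \<Rightarrow> 'i \<Rightarrow> int"
  assumes sym: "M i j = M j i"
    and offdiag_nonneg: "i \<noteq> j \<Longrightarrow> 0 \<le> M i j"
    and neg_definite: "\<And>x::'i \<Rightarrow> real. (\<exists>i. x i \<noteq> 0) \<Longrightarrow>
          (\<Sum>i\<in>UNIV. \<Sum>j\<in>UNIV. x i * x j * of_int (M i j)) < 0"
begin

lemma inter_commute: "inter M C D = inter M D C"
  unfolding inter_def by (subst sum.swap) (simp add: sym mult_ac)

lemma inter_add_right: "inter M W (C + D) = inter M W C + inter M W D"
  using inter_add_left inter_commute by metis

lemma inter_diff_right: "inter M W (C - D) = inter M W C - inter M W D"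
  using inter_diff_left inter_commute by metis

lemma inter_sum_right:
  "inter M V (\<lambda>F. \<Sum>k\<in>S. c k * W k F) = (\<Sum>k\<in>S. c k * inter M V (W k))"
  using inter_sum_left[of M c W S V] inter_commute by simp

lemma inter_self_neg: "D \<noteq> 0 \<Longrightarrow> inter M D D < 0"
proof -
  assume "D \<noteq> 0"
  then have "(\<Sum>i\<in>UNIV. \<Sum>j\<in>UNIV. real_of_int (D i) * real_of_int (D j) * of_int (M i j)) < 0"
    by (intro neg_definite) auto
  then have "real_of_int (inter M D D) < 0"
    by (simp add: inter_def)
  then show ?thesis by simp
qed

lemma inter_self_nonpos: "inter M D D \<le> 0"
  using inter_self_neg[of D] by (cases "D = 0") (auto simp: inter_def)

lemma inter_self_nonneg_imp_zero: "0 \<le> inter M D D \<Longrightarrow> D = 0"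
  using inter_self_neg by fastforce

lemma pa_num_add: "pa_num M g (C + D) = pa_num M g C + pa_num M g D + 2 * inter M C D"
  unfolding pa_num_def by (simp add: inter_add_left inter_add_right canon_add inter_commute[of D C])

lemma pa_num_even: "even (pa_num M g D)"
proof -
  have "even (pa_num M g (\<lambda>i. if i \<in> S then D i else 0))" if "finite S" for S
    using that
  proof (induction S rule: finite_induct)
    case empty
    then show ?case by (simp add: pa_num_def inter_def canon_def)
  next
    case (insert x S)
    define s where "s = D x"
    have split: "(\<lambda>i. if i \<in> insert x S then D i else 0) =
        (\<lambda>i. if i \<in> S then D i else 0) + (\<lambda>i. s * comp_cycle x i)"
      using insert(2) by (auto simp: s_def comp_cycle_def)
    have "pa_num M g (\<lambda>i. s * comp_cycle x i) = s * (s - 1) * M x x + 2 * s * (int (g x) - 1)"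
      by (simp add: pa_num_def inter_scale_left inter_scale_right canon_scale canon_comp_cycle
          algebra_simps)
    then have "even (pa_num M g (\<lambda>i. s * comp_cycle x i))"
      by simp
    with insert.IH show ?case
      unfolding split pa_num_add by simp
  qed
  from this[of UNIV] show ?thesis by simp
qed

lemma double_pa_minus_one: "2 * (pa M g D - 1) = pa_num M g D"
  using pa_num_even[of g D] by (simp add: pa_def pa_num_def)

lemma pos_if_inter_comp_eq_neg_one:
  fixes x :: "'i \<Rightarrow> real"
  assumes row: "\<And>i. (\<Sum>j\<in>UNIV. of_int (M i j) * x j) = -1"
  shows "0 < x i"
proof -
  define xm where "xm i = max (- x i) 0" for i
  define xp where "xp i = max (x i) 0" for i
  \<comment> \<open>The negative part xm of x satisfies xm.xm = xm.xp - xm.(Mx) >= 0, hence vanishes.\<close>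
  have x_split: "x i = xp i - xm i" for i
    by (simp add: xp_def xm_def)
  have "(\<Sum>i\<in>UNIV. \<Sum>j\<in>UNIV. xm i * xm j * of_int (M i j)) =
        (\<Sum>i\<in>UNIV. \<Sum>j\<in>UNIV. xm i * xp j * of_int (M i j))
          - (\<Sum>i\<in>UNIV. xm i * (\<Sum>j\<in>UNIV. of_int (M i j) * x j))"
    by (simp add: x_split sum_distrib_left sum_subtractf[symmetric] algebra_simps)
  also have "\<dots> \<ge> 0"
  proof -
    have "0 \<le> xm i * xp j * of_int (M i j)" for i j
      using offdiag_nonneg[of i j] by (cases "i = j") (auto simp: xm_def xp_def)
    then have "0 \<le> (\<Sum>i\<in>UNIV. \<Sum>j\<in>UNIV. xm i * xp j * of_int (M i j))"
      by (intro sum_nonneg)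
    moreover have "(\<Sum>i\<in>UNIV. xm i * (\<Sum>j\<in>UNIV. of_int (M i j) * x j)) \<le> 0"
      using row by (simp add: xm_def sum_nonpos)
    ultimately show ?thesis by linarith
  qed
  finally have "\<forall>i. xm i = 0"
    using neg_definite[of xm] by fastforce
  then have nonneg: "0 \<le> x j" for j
    by (metis xm_def max.absorb_iff2 max.commute neg_le_0_iff_le)
  show "0 < x i"
  proof (rule ccontr)
    assume "\<not> 0 < x i"
    then have "x i = 0" using nonneg[of i] by linarith
    then have "0 \<le> (\<Sum>j\<in>UNIV. of_int (M i j) * x j)"
      using offdiag_nonneg[of i] nonneg by (intro sum_nonneg) (metis mult_eq_0_iff mult_nonneg_nonneg of_int_0_le_iff)
    then show False using row[of i] by simp
  qed
qed

lemma ex_cycle_pos_inter_comp_neg: "\<exists>D. (\<forall>i. 0 < D i) \<and> (\<forall>i. inter_comp M D i < 0)"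
proof -
  define Mr :: "real^'i^'i" where "Mr = (\<chi> i j. of_int (M i j))"
  have "x = 0" if "Mr *v x = 0" for x
  proof -
    have row: "(\<Sum>j\<in>UNIV. of_int (M i j) * x$j) = 0" for i
      using that by (simp add: vec_eq_iff matrix_vector_mult_def Mr_def)
    have "(\<Sum>i\<in>UNIV. \<Sum>j\<in>UNIV. x$i * x$j * of_int (M i j)) =
          (\<Sum>i\<in>UNIV. x$i * (\<Sum>j\<in>UNIV. of_int (M i j) * x$j))"
      by (simp add: sum_distrib_left mult_ac)
    then have "\<not> (\<exists>i. x$i \<noteq> 0)"
      using neg_definite[of "\<lambda>i. x$i"] row by auto
    then show "x = 0" by (simp add: vec_eq_iff)
  qed
  then have "invertible Mr"
    using matrix_left_invertible_ker matrix_left_right_inverse invertible_def by blast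
  then have det_nz: "det Mr \<noteq> 0"
    using invertible_det_nz by blast
  define b :: "real^'i" where "b = (\<chi> i. -1)"
  define num where "num k = det (\<chi> i j. if j = k then b$i else Mr$i$j)" for k
  define x :: "real^'i" where "x = (\<chi> k. num k / det Mr)"
  have "Mr *v x = b"
    using cramer[OF det_nz, of x b] by (simp add: x_def num_def)
  then have row: "(\<Sum>j\<in>UNIV. of_int (M i j) * x$j) = -1" for i
    by (simp add: vec_eq_iff matrix_vector_mult_def Mr_def b_def)
  have x_pos: "0 < x$i" for i
    using pos_if_inter_comp_eq_neg_one[of "\<lambda>j. x$j"] row by blast
  \<comment> \<open>The numerators in Cramer's rule are integers, so scaling x by |det Mr| gives a cycle.\<close>
  have "num k \<in> \<int>" for k
    unfolding num_def by (rule det_Ints) (auto simp: b_def Mr_def)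
  then have "\<forall>k. \<exists>z. num k = of_int z"
    by (metis Ints_cases)
  then obtain N where N: "\<And>k. num k = of_int (N k)"
    by metis
  define D where "D k = (if det Mr > 0 then N k else - N k)" for k
  have D: "of_int (D k) = \<bar>det Mr\<bar> * x$k" for k
  proof -
    have "x$k = num k / det Mr"
      by (simp add: x_def)
    then show ?thesis
      using det_nz by (cases "det Mr > 0") (simp_all add: D_def N)
  qed
  have "0 < D i" for i
  proof -
    have "0 < real_of_int (D i)"
      unfolding D using x_pos[of i] det_nz by simp
    then show ?thesis by simp
  qed
  moreover have "inter_comp M D i < 0" for i
  proof -
    have "real_of_int (inter_comp M D i) = \<bar>det Mr\<bar> * (\<Sum>j\<in>UNIV. of_int (M i j) * x$j)"
      by (simp add: inter_comp_def D sum_distrib_left sym[of _ i] mult_ac)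
    also have "\<dots> < 0"
      using row[of i] det_nz by simp
    finally show ?thesis by simp
  qed
  ultimately show ?thesis by blast
qed

lemma inter_comp_mono_at:
  assumes "X \<le> Y" "X i = Y i"
  shows "inter_comp M X i \<le> inter_comp M Y i"
  unfolding inter_comp_def
proof (rule sum_mono)
  fix j
  show "X j * M j i \<le> Y j * M j i"
    using assms offdiag_nonneg[of j i] by (cases "j = i") (auto simp: le_fun_def intro: mult_right_mono)
qed

lemma inter_comp_min_nonpos:
  assumes "inter_comp M C i \<le> 0" "inter_comp M D i \<le> 0"
  shows "inter_comp M (\<lambda>j. min (C j) (D j)) i \<le> 0"
proof (cases "C i \<le> D i")
  case True
  then have "inter_comp M (\<lambda>j. min (C j) (D j)) i \<le> inter_comp M C i"
    by (intro inter_comp_mono_at) (auto simp: le_fun_def)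
  with assms show ?thesis by linarith
next
  case False
  then have "inter_comp M (\<lambda>j. min (C j) (D j)) i \<le> inter_comp M D i"
    by (intro inter_comp_mono_at) (auto simp: le_fun_def)
  with assms show ?thesis by linarith
qed

lemma fund_cycle_is_fund_on: "is_fund_on M UNIV (fund_cycle M)"
proof -
  define S where "S = {D. (\<forall>i. 0 < D i) \<and> (\<forall>i. inter_comp M D i \<le> 0)}"
  have S_iff: "pos_cycle D \<and> supp D = UNIV \<and> (\<forall>i\<in>UNIV. inter_comp M D i \<le> 0) \<longleftrightarrow> D \<in> S" for D
    unfolding S_def pos_cycle_def supp_def by (auto simp: order_less_le)
  obtain D1 where "\<forall>i. 0 < D1 i" "\<forall>i. inter_comp M D1 i < 0"
    using ex_cycle_pos_inter_comp_neg by blast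
  then have "D1 \<in> S"
    by (simp add: S_def less_imp_le)
  then obtain D0 where "D0 \<in> S" and least: "\<And>D. D \<in> S \<Longrightarrow> nat (sum D0 UNIV) \<le> nat (sum D UNIV)"
    using ex_has_least_nat[of "\<lambda>D. D \<in> S" D1 "\<lambda>D. nat (sum D UNIV)"] by blast
  have sum_nonneg_S: "0 \<le> sum D UNIV" if "D \<in> S" for D
    using that by (auto simp: S_def intro: sum_nonneg less_imp_le)
  have least_le: "D0 \<le> D" if "D \<in> S" for D
  proof -
    define N where "N j = min (D0 j) (D j)" for j
    have "N \<in> S"
      using \<open>D0 \<in> S\<close> that inter_comp_min_nonpos unfolding S_def N_def by auto
    then have "sum D0 UNIV \<le> sum N UNIV"
      using least[of N] sum_nonneg_S[of N] sum_nonneg_S[OF \<open>D0 \<in> S\<close>] by simp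
    moreover have "N j \<le> D0 j" for j
      by (simp add: N_def)
    ultimately have "sum N UNIV = sum D0 UNIV"
      by (meson order_antisym sum_mono)
    then have "N j = D0 j" for j
      by (rule sum_mono_inv) (simp_all add: \<open>\<And>j. N j \<le> D0 j\<close>)
    then show "D0 \<le> D"
      by (simp add: le_fun_def N_def min_def) (metis order.refl)
  qed
  have "is_fund_on M UNIV D0"
    unfolding is_fund_on_def Let_def S_iff using \<open>D0 \<in> S\<close> least_le by blast
  moreover have "D = D0" if "is_fund_on M UNIV D" for D
    using that \<open>D0 \<in> S\<close> least_le unfolding is_fund_on_def Let_def S_iff
    by (blast intro: order_antisym)
  ultimately show ?thesis
    unfolding fund_cycle_def by (rule theI)
qed

lemma fund_cycle_pos: "0 < fund_cycle M i"
proof -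
  have "0 \<le> fund_cycle M i" "fund_cycle M i \<noteq> 0"
    using fund_cycle_is_fund_on unfolding is_fund_on_def Let_def pos_cycle_def supp_def
    by auto
  then show ?thesis by simp
qed

lemma fund_cycle_nef: "inter_comp M (fund_cycle M) i \<le> 0"
  using fund_cycle_is_fund_on unfolding is_fund_on_def Let_def by blast

lemma inter_comp_nonneg_off_supp:
  assumes "\<And>G. 0 \<le> D G" "D F = 0"
  shows "0 \<le> inter_comp M D F"
  unfolding inter_comp_def
  using assms offdiag_nonneg by (intro sum_nonneg) (metis mult_eq_0_iff mult_nonneg_nonneg)

lemma degree_one_nef_diff_neg_comp:
  assumes D: "degree_one_nef M D" and E: "is_neg_comp M D E" and "M E E = -2"
  shows "degree_one_nef M (D - comp_cycle E)"
proof -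
  have "0 \<le> (D - comp_cycle E) F" for F
    using D E by (cases "F = E") (auto simp: degree_one_nef_def is_neg_comp_def comp_cycle_def)
  moreover have "inter_comp M (D - comp_cycle E) F \<le> 0" if "0 < (D - comp_cycle E) F" for F
  proof -
    have "F \<noteq> E" "0 < D F"
      using that E by (auto simp: is_neg_comp_def comp_cycle_def split: if_splits)
    then show ?thesis
      using E offdiag_nonneg[of E F] by (simp add: inter_comp_diff is_neg_comp_def)
  qed
  moreover have "inter M (D - comp_cycle E) (D - comp_cycle E) = -1"
    using D E \<open>M E E = -2\<close>
    by (simp add: degree_one_nef_def is_neg_comp_def inter_diff_left inter_diff_right
        inter_comp_diff inter_commute[of "comp_cycle E" D])
  ultimately show ?thesis
    unfolding degree_one_nef_def by blast
qed

lemma pa_num_diff_comp_cycle: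
  assumes "inter_comp M D E = -1" "g E = 0" "M E E = -2"
  shows "pa_num M g (D - comp_cycle E) = pa_num M g D"
  using assms
  by (simp add: pa_num_def inter_diff_left inter_diff_right inter_commute[of "comp_cycle E" D]
      inter_comp_diff canon_diff canon_comp_cycle)

lemma pa_num_diff_orth:
  assumes "inter M D X = 0"
  shows "pa_num M g (D - X) = pa_num M g D + inter M X X - canon M g X"
  using assms
  by (simp add: pa_num_def inter_diff_left inter_diff_right canon_diff inter_commute[of X D])

lemma bessel_inequality:
  assumes "finite S"
    and orth: "\<And>k j. k \<in> S \<Longrightarrow> j \<in> S \<Longrightarrow> inter M (v k) (v j) = (if k = j then -1 else 0)"
  shows "inter M D D \<le> - (\<Sum>k\<in>S. (inter M (v k) D)\<^sup>2)"
proof -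
  define a where "a k = inter M (v k) D" for k
  define V where "V F = (\<Sum>k\<in>S. - a k * v k F)" for F
  have "inter M (v j) (D - V) = 0" if "j \<in> S" for j
  proof -
    have "inter M (v j) V = (\<Sum>k\<in>S. - a k * (if j = k then -1 else 0))"
      unfolding V_def inter_sum_right using orth[OF that] by simp
    also have "\<dots> = a j"
      using \<open>finite S\<close> that by (simp add: if_distrib cong: if_cong)
    finally show ?thesis
      by (simp add: inter_diff_right a_def)
  qed
  then have "inter M (D - V) V = 0"
    unfolding V_def inter_sum_right by (simp add: inter_commute)
  moreover have "inter M V D = - (\<Sum>k\<in>S. (a k)\<^sup>2)"
    unfolding V_def inter_sum_left by (simp add: a_def power2_eq_square sum_negf)
  ultimately have "inter M D D = inter M (D - V) (D - V) - (\<Sum>k\<in>S. (a k)\<^sup>2)"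
    by (simp add: inter_diff_left inter_diff_right inter_commute[of V D])
  then show ?thesis
    using inter_self_nonpos[of "D - V"] by (simp add: a_def)
qed

lemma inter_self_add_le_of_orthonormal:
  assumes orth: "\<And>k j. k \<le> n \<Longrightarrow> j \<le> n \<Longrightarrow> inter M (v k) (v j) = (if k = j then -1 else 0)"
    and dual: "\<And>F. (\<Sum>k\<le>n. inter_comp M (v k) F) = (if F = A then -1 else 0)"
  shows "inter M D D + (2 * p - 1) * D A \<le> int (Suc n) * (p * (p - 1))"
proof -
  define a where "a k = - inter M (v k) D" for k
  have "(\<Sum>k\<le>n. a k) = - (\<Sum>F\<in>UNIV. D F * (\<Sum>k\<le>n. inter_comp M (v k) F))"
    unfolding a_def inter_eq_sum_inter_comp
    by (simp add: sum_negf sum_distrib_left) (rule sum.swap)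
  also have "\<dots> = D A"
    unfolding dual by (simp add: mult.commute[of "D _"] if_distrib cong: if_cong)
  finally have sum_a: "(\<Sum>k\<le>n. a k) = D A" .
  have "inter M D D \<le> - (\<Sum>k\<le>n. (a k)\<^sup>2)"
    using bessel_inequality[of "{..n}" v D] orth by (simp add: a_def)
  then have "inter M D D + (2 * p - 1) * D A \<le> (\<Sum>k\<le>n. (2 * p - 1) * a k - a k * a k)"
    by (simp add: sum_a[symmetric] sum_distrib_left sum_subtractf power2_eq_square)
  also have "\<dots> \<le> (\<Sum>k\<le>n. p * (p - 1))"
    by (rule sum_mono) (rule int_quadratic_bound)
  finally show ?thesis by simp
qed

lemma ess_irreducible_ex_special_comp:
  assumes "ess_irreducible M g"
  shows "\<exists>A. \<forall>i. i \<noteq> A \<longrightarrow> minus2_curve M g i"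
proof -
  obtain A where A:
    "(\<forall>i. fund_cycle M i - (if i = A then fund_cycle M A else 0) = 0) \<or>
     (\<forall>i\<in>supp (\<lambda>i. fund_cycle M i - (if i = A then fund_cycle M A else 0)). minus2_curve M g i)"
    using assms unfolding ess_irreducible_def Let_def by blast
  have "minus2_curve M g i" if "i \<noteq> A" for i
  proof -
    have "fund_cycle M i - (if i = A then fund_cycle M A else 0) \<noteq> 0"
      using that fund_cycle_pos[of i] by simp
    with A show ?thesis
      unfolding supp_def by blast
  qed
  then show ?thesis
    by blast
qed

end

section \<open>The Yau sequence of an essentially irreducible cycle of degree one\<close>

locale degree_one_ess_irreducible = neg_definite_form M for M :: "'i::finite \<Rightarrow> 'i \<Rightarrow> int" +
  fixes g :: "'i \<Rightarrow> nat" and A :: 'i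
  assumes fund_self_inter: "inter M (fund_cycle M) (fund_cycle M) = -1"
    and p_f_pos: "0 < p_f M g"
    and minus2_off_A: "i \<noteq> A \<Longrightarrow> g i = 0 \<and> M i i = -2"
begin

abbreviation Z :: "'i cycle" where "Z \<equiv> fund_cycle M"

abbreviation p :: int where "p \<equiv> p_f M g"

lemma canon_eq: "canon M g D = D A * canon M g (comp_cycle A)"
proof -
  have "canon M g D = (\<Sum>i\<in>UNIV. if i = A then D A * canon M g (comp_cycle A) else 0)"
    unfolding canon_comp_cycle unfolding canon_def by (intro sum.cong) (auto dest: minus2_off_A)
  then show ?thesis by simp
qed

lemma degree_one_nef_fund_cycle: "degree_one_nef M Z"
  using fund_cycle_pos fund_cycle_nef fund_self_inter
  by (simp add: degree_one_nef_def less_imp_le)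

text \<open>yau_seq k is D_(k+1) of the Yau sequence, obtained by removing the component on which the
  previous cycle is negative. Once that component is A the sequence becomes stationary, so only
  the indices up to yau_end are meaningful.\<close>

primrec yau_seq :: "nat \<Rightarrow> 'i cycle" where
  "yau_seq 0 = Z"
| "yau_seq (Suc k) =
     (if neg_comp M (yau_seq k) = A then yau_seq k else yau_seq k - comp_cycle (neg_comp M (yau_seq k)))"

declare yau_seq.simps(2) [simp del]

abbreviation crit :: "nat \<Rightarrow> 'i" where "crit k \<equiv> neg_comp M (yau_seq k)"

lemma yau_seq_Suc_if: "yau_seq (Suc k) = (if crit k = A then yau_seq k else yau_seq k - comp_cycle (crit k))"
  by (rule yau_seq.simps(2))

lemma degree_one_nef_yau_seq: "degree_one_nef M (yau_seq k)"
proof (induction k)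
  case 0
  show ?case by (simp add: degree_one_nef_fund_cycle)
next
  case (Suc k)
  then show ?case
    using degree_one_nef_diff_neg_comp[OF Suc is_neg_comp_neg_comp[OF Suc]] minus2_off_A
    by (simp add: yau_seq_Suc_if)
qed

lemma is_neg_comp_crit: "is_neg_comp M (yau_seq k) (crit k)"
  using is_neg_comp_neg_comp[OF degree_one_nef_yau_seq] .

lemma yau_seq_nonneg: "0 \<le> yau_seq k F"
  using degree_one_nef_yau_seq[of k] by (simp add: degree_one_nef_def)

lemma yau_seq_crit: "yau_seq k (crit k) = 1"
  using is_neg_comp_crit[of k] by (simp add: is_neg_comp_def)

lemma inter_comp_yau_seq_crit: "inter_comp M (yau_seq k) (crit k) = -1"
  using is_neg_comp_crit[of k] by (simp add: is_neg_comp_def)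

lemma inter_comp_yau_seq_eq_0: "0 < yau_seq k F \<Longrightarrow> F \<noteq> crit k \<Longrightarrow> inter_comp M (yau_seq k) F = 0"
  using is_neg_comp_crit[of k] by (simp add: is_neg_comp_def)

lemma pa_num_yau_seq: "pa_num M g (yau_seq k) = 2 * p - 2"
proof (induction k)
  case 0
  show ?case using double_pa_minus_one[of g Z] by (simp add: p_f_def)
next
  case (Suc k)
  then show ?case
    using pa_num_diff_comp_cycle[OF inter_comp_yau_seq_crit] minus2_off_A
    by (simp add: yau_seq_Suc_if)
qed

lemma yau_seq_at_A_eq: "yau_seq k A = Z A"
  by (induction k) (auto simp: yau_seq_Suc_if comp_cycle_def)

lemma yau_seq_Suc_le: "yau_seq (Suc k) \<le> yau_seq k"
  by (auto simp: yau_seq_Suc_if le_fun_def comp_cycle_def)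

lemma yau_seq_antimono: "k \<le> j \<Longrightarrow> yau_seq j \<le> yau_seq k"
  using lift_Suc_antimono_le[of yau_seq, OF yau_seq_Suc_le] by blast

lemma ex_crit_eq_A: "\<exists>k. crit k = A"
proof (rule ccontr)
  assume never_A: "\<nexists>k. crit k = A"
  have sum_eq: "sum (yau_seq k) UNIV = sum Z UNIV - int k" for k
  proof (induction k)
    case (Suc k)
    have "sum (yau_seq (Suc k)) UNIV = sum (yau_seq k) UNIV - sum (comp_cycle (crit k)) UNIV"
      using never_A by (simp add: yau_seq_Suc_if sum_subtractf)
    then show ?case
      using Suc by (simp add: comp_cycle_def)
  qed simp
  have "0 \<le> sum (yau_seq k) UNIV" for k
    by (intro sum_nonneg) (simp add: yau_seq_nonneg)
  from this[of "nat (sum Z UNIV) + 1"] show False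
    unfolding sum_eq by linarith
qed

definition yau_end :: nat where "yau_end = (LEAST k. crit k = A)"

lemma crit_yau_end: "crit yau_end = A"
  unfolding yau_end_def using ex_crit_eq_A by (rule LeastI_ex)

lemma crit_neq_A: "k < yau_end \<Longrightarrow> crit k \<noteq> A"
  unfolding yau_end_def using not_less_Least by blast

lemma yau_seq_Suc_less: "k < yau_end \<Longrightarrow> yau_seq (Suc k) = yau_seq k - comp_cycle (crit k)"
  using crit_neq_A by (simp add: yau_seq_Suc_if)

lemma yau_seq_at_A: "yau_seq k A = 1"
  using yau_seq_crit[of yau_end] crit_yau_end yau_seq_at_A_eq by metis

lemma yau_seq_pos_before:
  assumes "k < j" "k < yau_end" "0 < yau_seq j F"
  shows "0 < yau_seq k F \<and> F \<noteq> crit k"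
proof -
  have "yau_seq j F \<le> yau_seq (Suc k) F"
    using yau_seq_antimono[of "Suc k" j] assms(1) by (simp add: le_fun_def)
  then have "0 < yau_seq (Suc k) F"
    using assms(3) by linarith
  then show ?thesis
    using yau_seq_crit[of k] yau_seq_Suc_less[OF assms(2)]
    by (auto simp: comp_cycle_def split: if_splits)
qed

lemma yau_seq_orthonormal:
  assumes "k \<le> yau_end" "j \<le> yau_end"
  shows "inter M (yau_seq k) (yau_seq j) = (if k = j then -1 else 0)"
proof -
  have orth: "inter M (yau_seq k) (yau_seq j) = 0" if "k < j" "j \<le> yau_end" for k j
  proof -
    have "yau_seq j F * inter_comp M (yau_seq k) F = 0" for F
    proof (cases "0 < yau_seq j F")
      case True
      then show ?thesis
        using yau_seq_pos_before[of k j F] that inter_comp_yau_seq_eq_0 by simp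
    next
      case False
      then show ?thesis
        using yau_seq_nonneg[of j F] by simp
    qed
    then show ?thesis
      unfolding inter_eq_sum_inter_comp by (simp add: sum.neutral)
  qed
  show ?thesis
  proof (cases k j rule: linorder_cases)
    case less
    then show ?thesis using orth assms by simp
  next
    case equal
    then show ?thesis using degree_one_nef_yau_seq[of k] by (simp add: degree_one_nef_def)
  next
    case greater
    then show ?thesis using orth[of j k] assms by (simp add: inter_commute)
  qed
qed

lemma canon_comp_cycle_A: "canon M g (comp_cycle A) = 2 * p - 1"
  using pa_num_yau_seq[of yau_end] yau_seq_orthonormal[of yau_end yau_end]
    canon_eq[of "yau_seq yau_end"]
  by (simp add: pa_num_def yau_seq_at_A)

lemma inter_comp_yau_seq_Suc:
  "k < yau_end \<Longrightarrow> inter_comp M (yau_seq (Suc k)) F = inter_comp M (yau_seq k) F - M (crit k) F"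
  by (simp add: yau_seq_Suc_less inter_comp_diff)

lemma inter_comp_yau_seq_on_supp_end:
  assumes "0 < yau_seq yau_end F" "k \<le> yau_end"
  shows "inter_comp M (yau_seq k) F = (if k = yau_end \<and> F = A then -1 else 0)"
proof (cases "k = yau_end")
  case True
  then show ?thesis
    using assms inter_comp_yau_seq_eq_0[of yau_end F] inter_comp_yau_seq_crit[of yau_end] crit_yau_end
    by auto
next
  case False
  with assms show ?thesis
    using yau_seq_pos_before[of k yau_end F] inter_comp_yau_seq_eq_0 by simp
qed

lemma off_supp_end_eq_crit:
  assumes "yau_seq yau_end F = 0"
  obtains j where "j < yau_end" "F = crit j"
proof -
  obtain j where "j < yau_end" "yau_seq j F \<noteq> 0" "yau_seq (Suc j) F = 0"
    using ex_least_nat_less[of "\<lambda>i. yau_seq i F = 0", OF assms] fund_cycle_pos[of F] by auto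
  then show ?thesis
    using that yau_seq_Suc_less[of j] by (auto simp: comp_cycle_def split: if_splits)
qed

lemma yau_seq_crit_later:
  assumes "j < k" "j < yau_end"
  shows "yau_seq k (crit j) = 0"
proof -
  have "\<not> 0 < yau_seq k (crit j)"
    using yau_seq_pos_before[of j k "crit j"] assms by blast
  then show ?thesis
    using yau_seq_nonneg[of k "crit j"] by simp
qed

lemma inter_comp_yau_seq_Suc_crit:
  assumes "j < yau_end"
  shows "inter_comp M (yau_seq (Suc j)) (crit j) = 1"
  using inter_comp_yau_seq_Suc[OF assms] inter_comp_yau_seq_crit[of j] minus2_off_A[OF crit_neq_A[OF assms]]
  by simp

lemma inter_comp_yau_seq_crit_eq_0:
  assumes "Suc (Suc j) \<le> k" "k \<le> yau_end"
  shows "inter_comp M (yau_seq k) (crit j) = 0"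
  using assms
proof (induction k rule: nat_induct_at_least)
  case base
  have "0 < yau_seq j (crit (Suc j)) \<and> crit (Suc j) \<noteq> crit j"
    using yau_seq_pos_before[of j "Suc j" "crit (Suc j)"] yau_seq_crit[of "Suc j"] base by simp
  then have "inter_comp M (yau_seq j) (crit (Suc j)) = 0"
    using inter_comp_yau_seq_eq_0 by simp
  then have "M (crit j) (crit (Suc j)) = 1"
    using inter_comp_yau_seq_Suc[of j "crit (Suc j)"] inter_comp_yau_seq_crit[of "Suc j"] base by simp
  then show ?case
    using inter_comp_yau_seq_Suc[of "Suc j" "crit j"] inter_comp_yau_seq_Suc_crit[of j] base
      sym[of "crit (Suc j)" "crit j"]
    by simp
next
  case (Suc k)
  then have "k < yau_end" "j < k"
    by simp_all
  then have "yau_seq k (crit j) = 0" "yau_seq (Suc k) (crit j) = 0"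
    using yau_seq_crit_later by simp_all
  then have "crit k \<noteq> crit j"
    using yau_seq_crit[of k] by auto
  then have "inter_comp M (yau_seq (Suc k)) (crit j) \<le> 0"
    using inter_comp_yau_seq_Suc[OF \<open>k < yau_end\<close>] Suc offdiag_nonneg by simp
  moreover have "0 \<le> inter_comp M (yau_seq (Suc k)) (crit j)"
    using inter_comp_nonneg_off_supp yau_seq_nonneg \<open>yau_seq (Suc k) (crit j) = 0\<close> by blast
  ultimately show ?case by simp
qed

lemma inter_comp_yau_seq_crit_earlier:
  assumes "j < yau_end" "k \<le> yau_end"
  shows "inter_comp M (yau_seq k) (crit j) = (if k = Suc j then 1 else if k = j then -1 else 0)"
proof -
  consider "k < j" | "k = j" | "k = Suc j" | "Suc (Suc j) \<le> k"
    by linarith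
  then show ?thesis
  proof cases
    case 1
    then have "0 < yau_seq k (crit j) \<and> crit j \<noteq> crit k"
      using yau_seq_pos_before[of k j "crit j"] assms yau_seq_crit[of j] by simp
    with 1 show ?thesis
      using inter_comp_yau_seq_eq_0 by simp
  next
    case 2
    then show ?thesis
      using inter_comp_yau_seq_crit by simp
  next
    case 3
    then show ?thesis
      using inter_comp_yau_seq_Suc_crit assms(1) by simp
  next
    case 4
    then show ?thesis
      using inter_comp_yau_seq_crit_eq_0 assms(2) by simp
  qed
qed

lemma sum_inter_comp_yau_seq:
  "(\<Sum>k\<le>yau_end. inter_comp M (yau_seq k) F) = (if F = A then -1 else 0)"
proof (cases "0 < yau_seq yau_end F")
  case True
  have "(\<Sum>k\<le>yau_end. inter_comp M (yau_seq k) F) =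
      (\<Sum>k\<le>yau_end. if k = yau_end then (if F = A then -1 else 0) else 0)"
  proof (rule sum.cong)
    fix k assume "k \<in> {..yau_end}"
    then show "inter_comp M (yau_seq k) F = (if k = yau_end then (if F = A then -1 else 0) else 0)"
      using inter_comp_yau_seq_on_supp_end[OF True, of k] by simp
  qed simp
  then show ?thesis
    by simp
next
  case False
  then have "yau_seq yau_end F = 0"
    using yau_seq_nonneg[of yau_end F] by simp
  then obtain j where j: "j < yau_end" "F = crit j"
    by (rule off_supp_end_eq_crit)
  have "(\<Sum>k\<le>yau_end. inter_comp M (yau_seq k) F) =
          (\<Sum>k\<le>yau_end. (if k = Suc j then 1 else 0) - (if k = j then 1 else 0))"
  proof (rule sum.cong)
    fix k assume "k \<in> {..yau_end}"
    then show "inter_comp M (yau_seq k) F = (if k = Suc j then 1 else 0) - (if k = j then 1 else 0)"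
      using inter_comp_yau_seq_crit_earlier[of j k] j by simp
  qed simp
  also have "\<dots> = 0"
    using j by (simp add: sum_subtractf)
  finally show ?thesis
    using j crit_neq_A by simp
qed

lemma pa_eq_p_f_iff: "pa M g D = p \<longleftrightarrow> pa_num M g D = 2 * p - 2"
  using double_pa_minus_one[of g D] by auto

lemma pa_num_eq_inter_self_add: "pa_num M g D = inter M D D + (2 * p - 1) * D A"
  by (simp add: pa_num_def canon_eq[of D] canon_comp_cycle_A)

lemma eq_yau_seq_if_crit_pos:
  assumes "\<And>F. 0 \<le> Y F" "Y \<le> yau_seq k" "0 < Y (crit k)" "pa_num M g Y = 2 * p - 2"
  shows "Y = yau_seq k"
proof -
  define X where "X = yau_seq k - Y"
  have "Y (crit k) \<le> 1"
    using le_funD[OF assms(2), of "crit k"] yau_seq_crit[of k] by simp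
  then have "X (crit k) = 0"
    using assms(3) yau_seq_crit[of k] by (simp add: X_def)
  have "X F * inter_comp M (yau_seq k) F = 0" for F
  proof (cases "X F = 0")
    case False
    then have "Y F < yau_seq k F"
      using le_funD[OF assms(2), of F] by (simp add: X_def)
    then have "0 < yau_seq k F"
      using assms(1)[of F] by linarith
    moreover have "F \<noteq> crit k"
      using False \<open>X (crit k) = 0\<close> by auto
    ultimately show ?thesis
      using inter_comp_yau_seq_eq_0 by simp
  qed simp
  then have "inter M (yau_seq k) X = 0"
    unfolding inter_eq_sum_inter_comp by (simp add: sum.neutral)
  then have "pa_num M g Y = pa_num M g (yau_seq k) + inter M X X - canon M g X"
    using pa_num_diff_orth[of "yau_seq k" X g] by (simp add: X_def)
  then have "inter M X X = (2 * p - 1) * X A"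
    using assms(4) pa_num_yau_seq[of k] canon_eq[of X] canon_comp_cycle_A by simp
  moreover have "0 \<le> X A"
    using assms(2) by (simp add: X_def le_fun_def)
  ultimately have "0 \<le> inter M X X"
    using p_f_pos by simp
  then show ?thesis
    using inter_self_nonneg_imp_zero[of X] by (simp add: X_def)
qed

lemma yau_seq_end_le:
  assumes "pos_cycle Y" "pa M g Y = p" "k \<le> yau_end" "Y \<le> yau_seq k"
  shows "yau_seq yau_end \<le> Y"
  using assms(3,4)
proof (induction k rule: inc_induct)
  case base
  have "0 < Y A"
  proof (rule ccontr)
    assume "\<not> 0 < Y A"
    moreover have "0 \<le> Y A"
      using assms(1) by (simp add: pos_cycle_def)
    ultimately have "Y A = 0"
      by simp
    moreover have "Y \<noteq> 0"
      using assms(1) by (auto simp: pos_cycle_def)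
    then have "inter M Y Y < 0"
      by (rule inter_self_neg)
    ultimately show False
      using assms(2) p_f_pos by (simp add: pa_eq_p_f_iff pa_num_eq_inter_self_add)
  qed
  then show ?case
    using eq_yau_seq_if_crit_pos[of Y yau_end] assms(1,2) base crit_yau_end
    by (simp add: pos_cycle_def pa_eq_p_f_iff)
next
  case (step k)
  show ?case
  proof (cases "Y (crit k) = 0")
    case True
    then have "Y \<le> yau_seq (Suc k)"
      using step.prems yau_seq_Suc_less[OF step.hyps(2)] yau_seq_crit[of k]
      by (auto simp: le_fun_def comp_cycle_def)
    then show ?thesis
      by (rule step.IH)
  next
    case False
    moreover have "0 \<le> Y (crit k)"
      using assms(1) by (simp add: pos_cycle_def)
    ultimately have "Y = yau_seq k"
      using eq_yau_seq_if_crit_pos[of Y k] assms(1,2) step.prems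
      by (simp add: pos_cycle_def pa_eq_p_f_iff)
    then show ?thesis
      using yau_seq_antimono step.hyps by simp
  qed
qed

lemma pos_cycle_yau_seq: "pos_cycle (yau_seq k)"
  using yau_seq_nonneg yau_seq_at_A unfolding pos_cycle_def by (metis zero_neq_one)

lemma pa_yau_seq: "pa M g (yau_seq k) = p"
  using pa_num_yau_seq pa_eq_p_f_iff by blast

lemma Z_min_eq: "Z_min M g = yau_seq yau_end"
  unfolding Z_min_def Let_def
proof (rule the_minimal_eq_least)
  show "pos_cycle (yau_seq yau_end) \<and> yau_seq yau_end \<le> Z \<and> pa M g (yau_seq yau_end) = pa M g Z"
    using pos_cycle_yau_seq pa_yau_seq yau_seq_antimono[of 0 yau_end] by (simp add: p_f_def)
qed (use yau_seq_end_le[of _ 0] in \<open>simp add: p_f_def\<close>)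

lemma tyurina_yau_seq:
  assumes "k < yau_end"
  shows "tyurina M g (yau_seq k) = yau_seq (Suc k)"
  unfolding tyurina_def Let_def
proof (rule the_maximal_eq_greatest)
  have "yau_seq (Suc k) (crit k) = 0"
    using yau_seq_crit_later assms by simp
  then have "yau_seq (Suc k) < yau_seq k"
    using yau_seq_Suc_le[of k] yau_seq_crit[of k] by (metis order_less_le zero_neq_one)
  moreover have "num_trivial M (yau_seq (Suc k)) (yau_seq k)"
    unfolding num_trivial_def supp_def
  proof (intro ballI)
    fix F
    assume "F \<in> {i. yau_seq (Suc k) i \<noteq> 0}"
    then have "0 < yau_seq (Suc k) F"
      using yau_seq_nonneg[of "Suc k" F] by simp
    then show "inter_comp M (yau_seq k) F = 0"
      using yau_seq_pos_before[of k "Suc k" F] assms inter_comp_yau_seq_eq_0 by simp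
  qed
  ultimately show "pos_cycle (yau_seq (Suc k)) \<and> yau_seq (Suc k) < yau_seq k \<and>
      num_trivial M (yau_seq (Suc k)) (yau_seq k) \<and> pa M g (yau_seq (Suc k)) = pa M g (yau_seq k)"
    using pos_cycle_yau_seq pa_yau_seq by simp
next
  fix X
  assume X: "pos_cycle X \<and> X < yau_seq k \<and> num_trivial M X (yau_seq k) \<and> pa M g X = pa M g (yau_seq k)"
  then have "X (crit k) = 0"
    using inter_comp_yau_seq_crit[of k] unfolding num_trivial_def supp_def by auto
  show "X \<le> yau_seq (Suc k)"
  proof (rule le_funI)
    fix F
    have "X F \<le> yau_seq k F"
      using X by (simp add: le_funD less_imp_le)
    then show "X F \<le> yau_seq (Suc k) F"
      using \<open>X (crit k) = 0\<close> yau_seq_Suc_less[OF assms] yau_seq_crit[of k]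
      by (cases "F = crit k") (simp_all add: comp_cycle_def)
  qed
qed

lemma yau_cycle_eq_yau_seq: "k \<le> yau_end \<Longrightarrow> yau_cycle M g k = yau_seq k"
  by (induction k) (simp_all add: tyurina_yau_seq)

lemma yau_length_eq: "yau_length M g = Suc yau_end"
proof -
  have "(LEAST k. inter M (yau_cycle M g k) (Z_min M g) < 0) = yau_end"
  proof (rule Least_equality)
    show "inter M (yau_cycle M g yau_end) (Z_min M g) < 0"
      by (simp add: yau_cycle_eq_yau_seq Z_min_eq yau_seq_orthonormal)
  next
    fix k
    assume "inter M (yau_cycle M g k) (Z_min M g) < 0"
    then show "yau_end \<le> k"
      using yau_cycle_eq_yau_seq[of k] yau_seq_orthonormal[of k yau_end]
      by (cases "k \<le> yau_end") (auto simp: Z_min_eq split: if_splits)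
  qed
  then show ?thesis
    by (simp add: yau_length_def)
qed

lemma pa_num_le: "pa_num M g D \<le> int (Suc yau_end) * (p * (p - 1))"
  unfolding pa_num_eq_inter_self_add
  using yau_seq_orthonormal sum_inter_comp_yau_seq by (rule inter_self_add_le_of_orthonormal)

lemma pa_num_sum_yau_seq:
  "pa_num M g (\<lambda>F. \<Sum>k\<le>yau_end. p * yau_seq k F) = int (Suc yau_end) * (p * (p - 1))"
proof -
  define W where "W F = (\<Sum>k\<le>yau_end. p * yau_seq k F)" for F
  have "inter M (yau_seq j) W = - p" if "j \<le> yau_end" for j
  proof -
    have "inter M (yau_seq j) W = (\<Sum>k\<le>yau_end. if k = j then - p else 0)"
      unfolding W_def inter_sum_right using that by (intro sum.cong) (simp_all add: yau_seq_orthonormal)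
    then show ?thesis
      using that by simp
  qed
  then have "inter M W W = - (int (Suc yau_end) * p * p)"
    unfolding W_def[abs_def] inter_sum_left by simp
  moreover have "W A = int (Suc yau_end) * p"
    by (simp add: W_def yau_seq_at_A)
  ultimately show ?thesis
    unfolding W_def[symmetric] pa_num_eq_inter_self_add by (simp add: algebra_simps)
qed

lemma arith_genus_eq: "arith_genus M g = 1 + int (Suc yau_end) * (p * (p - 1)) div 2"
  unfolding arith_genus_def
proof (rule Greatest_equality)
  have "pos_cycle (\<lambda>F. \<Sum>k\<le>yau_end. p * yau_seq k F)"
    using p_f_pos yau_seq_nonneg yau_seq_at_A unfolding pos_cycle_def
    by (auto intro!: sum_nonneg exI[of _ A])
  then show "\<exists>D. pos_cycle D \<and> 1 + int (Suc yau_end) * (p * (p - 1)) div 2 = pa M g D"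
    using pa_num_sum_yau_seq by (auto simp: pa_def pa_num_def)
next
  fix a
  assume "\<exists>D. pos_cycle D \<and> a = pa M g D"
  then obtain D where "a = pa M g D"
    by blast
  then show "a \<le> 1 + int (Suc yau_end) * (p * (p - 1)) div 2"
    using zdiv_mono1[OF pa_num_le[of D], of 2] by (simp add: pa_def pa_num_def)
qed

end

theorem theorem3p11:
  fixes M :: "'i::finite \<Rightarrow> 'i \<Rightarrow> int" and g :: "'i \<Rightarrow> nat"
  assumes "exc_config M g"
    and "minimal_config M g"
    and "inter M (fund_cycle M) (fund_cycle M) = -1"
    and "p_f M g > 0"
    and "ess_irreducible M g"
  shows "arith_genus M g =
           p_f M g * (p_f M g - 1) * int (yau_length M g) div 2 + 1"
proof -
  interpret neg_definite_form M
    using assms(1) unfolding exc_config_def by unfold_locales blast+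
  obtain A where "\<And>i. i \<noteq> A \<Longrightarrow> minus2_curve M g i"
    using ess_irreducible_ex_special_comp[OF assms(5)] by blast
  then interpret degree_one_ess_irreducible M g A
    using assms(3,4) by unfold_locales (auto simp: minus2_curve_def)
  show ?thesis
    using arith_genus_eq yau_length_eq by (simp add: mult_ac)
qed

end
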